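(* Let $N\ge2$, $d\ge1$, $1\le p\le q\le\infty$, let $S\subset\mathbb{Z}_N^d$ be nonempty and satisfy a $(p,q)$-restriction estimate with constant $C_{p,q}>0$, and let $E\subset\mathbb{Z}_N^d$ satisfy $$|E|^{1/p}\cdot|S|<\frac{N^d}{2C_{p,q}}.$$ Let $r(x)=\sum_{m\notin S}\chi(x\cdot m)\widehat{1_E}(m)$ and $G(x)=1$ if $|r(x)|\ge1/2$, $G(x)=0$ otherwise. Then $G=1_E$ on $\mathbb{Z}_N^d$.
   Context: $\chi(t)=e^{2\pi i t/N}$, $\hat h(m)=N^{-d}\sum_{x\in\mathbb{Z}_N^d}\chi(-x\cdot m)h(x)$, and $1_E$ is the indicator function of $E$. A $(p,q)$-restriction estimate holds for a nonempty $S$ with constant $C_{p,q}$ if for every $h:\mathbb{Z}_N^d\to\mathbb{C}$, $\big(\frac{1}{|S|}\sum_{m\in S}|\hat h(m)|^q\big)^{1/q}\le C_{p,q}N^{-d}\big(\sum_x|h(x)|^p\big)^{1/p}$ (for $q=\infty$ the left side is $\max_{m\in S}|\hat h(m)|$). *)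

theory Defs
  imports "HOL-Analysis.Analysis"
begin

definition ZN :: "nat \<Rightarrow> nat \<Rightarrow> (nat \<Rightarrow> nat) set" where
  "ZN N d = {x. (\<forall>i<d. x i < N) \<and> (\<forall>i\<ge>d. x i = 0)}"

definition dotp :: "nat \<Rightarrow> (nat \<Rightarrow> nat) \<Rightarrow> (nat \<Rightarrow> nat) \<Rightarrow> int" where
  "dotp d x m = (\<Sum>i<d. int (x i * m i))"

definition chi :: "nat \<Rightarrow> int \<Rightarrow> complex" where
  "chi N t = exp (2 * of_real pi * \<i> * of_int t / of_nat N)"

definition fhat :: "nat \<Rightarrow> nat \<Rightarrow> ((nat \<Rightarrow> nat) \<Rightarrow> complex) \<Rightarrow> (nat \<Rightarrow> nat) \<Rightarrow> complex" where
  "fhat N d h m = (1 / of_nat N ^ d) * (\<Sum>x\<in>ZN N d. chi N (- dotp d x m) * h x)"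

definition lpnorm :: "ereal \<Rightarrow> 'a set \<Rightarrow> ('a \<Rightarrow> complex) \<Rightarrow> real" where
  "lpnorm p A h = (if p = \<infinity> then Max ((\<lambda>x. cmod (h x)) ` A)
     else (\<Sum>x\<in>A. cmod (h x) powr real_of_ereal p) powr (1 / real_of_ereal p))"

definition avgnorm :: "ereal \<Rightarrow> 'a set \<Rightarrow> ('a \<Rightarrow> complex) \<Rightarrow> real" where
  "avgnorm q A g = (if q = \<infinity> then Max ((\<lambda>m. cmod (g m)) ` A)
     else ((1 / real (card A)) * (\<Sum>m\<in>A. cmod (g m) powr real_of_ereal q)) powr (1 / real_of_ereal q))"

definition restriction_estimate ::
  "nat \<Rightarrow> nat \<Rightarrow> (nat \<Rightarrow> nat) set \<Rightarrow> ereal \<Rightarrow> ereal \<Rightarrow> real \<Rightarrow> bool" where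
  "restriction_estimate N d S p q C \<longleftrightarrow>
     (\<forall>h :: (nat \<Rightarrow> nat) \<Rightarrow> complex.
        avgnorm q S (fhat N d h) \<le> C * (1 / real N ^ d) * lpnorm p (ZN N d) h)"

end

theory Submission
  imports Defs
begin

text \<open>
  Fourier inversion writes \<open>1\<^sub>E(x) = r(x) + e(x)\<close> with
  \<open>e(x) = \<Sum>\<^sub>m\<^sub>\<in>\<^sub>S \<chi>(x\<cdot>m) \<hat>1\<^sub>E(m)\<close>. The power-mean inequality turns the averaged
  \<open>L\<^sup>q\<close> norm of the restriction estimate into an \<open>\<ell>\<^sup>1\<close> bound, so
  \<open>|e(x)| \<le> |S| C N\<^sup>-\<^sup>d |E|\<^sup>1\<^sup>/\<^sup>p < 1/2\<close>; hence \<open>|r(x)| \<ge> 1/2\<close> exactly when \<open>x \<in> E\<close>.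
  Inversion rests on orthogonality of characters, which follows by factoring the character sum
  over \<open>\<int>\<^sub>N\<^sup>d\<close> into one-dimensional geometric sums of a nontrivial \<open>N\<close>-th root of unity.
\<close>

lemma chi_add: "chi N (a + b) = chi N a * chi N b"
  unfolding chi_def by (simp add: add_divide_distrib distrib_left exp_add)

lemma chi_0 [simp]: "chi N 0 = 1"
  unfolding chi_def by simp

lemma norm_chi [simp]: "cmod (chi N t) = 1"
  unfolding chi_def by (simp add: norm_exp_eq_Re)

lemma chi_sum: "chi N (\<Sum>i\<in>A. f i) = (\<Prod>i\<in>A. chi N (f i))"
  by (induction A rule: infinite_finite_induct) (simp_all add: chi_add)

lemma chi_mult_of_nat: "chi N (a * int k) = chi N a ^ k"
  by (induction k) (simp_all add: distrib_left chi_add)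

lemma chi_eq_1_iff:
  assumes "N > 0"
  shows "chi N t = 1 \<longleftrightarrow> int N dvd t"
proof -
  have "chi N t = 1 \<longleftrightarrow> (\<exists>n::int. 2 * pi * t / N = of_int (2 * n) * pi)"
    unfolding chi_def exp_eq_1 by simp
  also have "\<dots> \<longleftrightarrow> (\<exists>n::int. real_of_int t = of_int (n * int N))"
    using assms by (simp add: field_simps)
  also have "\<dots> \<longleftrightarrow> int N dvd t"
    by (metis dvd_def mult.commute of_int_eq_iff)
  finally show ?thesis .
qed

lemma sum_powers_root_of_unity:
  fixes w :: "'a::field"
  assumes "w ^ n = 1" and "w \<noteq> 1"
  shows "(\<Sum>k<n. w ^ k) = 0"
  using assms by (simp add: geometric_sum)

lemma bij_betw_PiE_ZN:
  "bij_betw (\<lambda>f i. if i < d then f i else 0) (PiE {..<d} (\<lambda>_. {..<N})) (ZN N d)"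
  by (rule bij_betw_byWitness[where f' = "\<lambda>x. restrict x {..<d}"])
    (auto simp: ZN_def PiE_def Pi_def extensional_def fun_eq_iff)

lemma finite_ZN: "finite (ZN N d)"
  using bij_betw_finite[OF bij_betw_PiE_ZN] by (simp add: finite_PiE)

lemma card_ZN: "card (ZN N d) = N ^ d"
  using bij_betw_same_card[OF bij_betw_PiE_ZN] by (simp add: card_PiE)

lemma ZN_nonempty:
  assumes "N > 0"
  shows "ZN N d \<noteq> {}"
proof -
  have "(\<lambda>_. 0) \<in> ZN N d"
    using assms by (simp add: ZN_def)
  then show ?thesis
    by blast
qed

lemma dotp_diff:
  "dotp d x m - dotp d y m = (\<Sum>i<d. (int (x i) - int (y i)) * int (m i))"
  unfolding dotp_def by (simp add: sum_subtractf left_diff_distrib)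

lemma sum_ZN_chi_dotp_diff:
  assumes "x \<in> ZN N d" and "y \<in> ZN N d" and "N > 0"
  shows "(\<Sum>m\<in>ZN N d. chi N (dotp d x m - dotp d y m)) = (if x = y then of_nat N ^ d else 0)"
proof (cases "x = y")
  case True
  then show ?thesis by (simp add: card_ZN)
next
  case False
  define w where "w i = chi N (int (x i) - int (y i))" for i
  obtain j where "x j \<noteq> y j"
    using False by blast
  have "j < d"
  proof (rule ccontr)
    assume "\<not> j < d"
    then have "x j = 0" "y j = 0"
      using assms(1,2) by (simp_all add: ZN_def)
    with \<open>x j \<noteq> y j\<close> show False by simp
  qed
  with assms have "x j < N" "y j < N"
    by (auto simp: ZN_def)
  with \<open>x j \<noteq> y j\<close> have "\<not> int N dvd int (x j) - int (y j)"
    using dvd_imp_le_int[of "int (x j) - int (y j)" "int N"] by auto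
  then have "w j \<noteq> 1"
    by (simp add: w_def chi_eq_1_iff[OF \<open>N > 0\<close>])
  moreover have "w j ^ N = 1"
    by (simp add: w_def flip: chi_mult_of_nat) (simp add: chi_eq_1_iff[OF \<open>N > 0\<close>])
  ultimately have factor_j: "(\<Sum>k<N. w j ^ k) = 0"
    by (rule sum_powers_root_of_unity[rotated])
  have "(\<Sum>m\<in>ZN N d. chi N (dotp d x m - dotp d y m))
      = (\<Sum>f\<in>PiE {..<d} (\<lambda>_. {..<N}). \<Prod>i<d. w i ^ f i)"
    unfolding sum.reindex_bij_betw[OF bij_betw_PiE_ZN, symmetric] dotp_diff chi_sum
    by (simp add: w_def chi_mult_of_nat)
  also have "\<dots> = (\<Prod>i<d. \<Sum>k<N. w i ^ k)"
    by (simp add: prod_sum_PiE)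
  also have "\<dots> = 0"
    using \<open>j < d\<close> factor_j by (auto intro: prod_zero)
  finally show ?thesis
    using False by simp
qed

lemma fourier_inversion:
  assumes "x \<in> ZN N d" and "N > 0"
  shows "(\<Sum>m\<in>ZN N d. chi N (dotp d x m) * fhat N d h m) = h x"
proof -
  have "(\<Sum>m\<in>ZN N d. chi N (dotp d x m) * fhat N d h m)
      = (\<Sum>y\<in>ZN N d. h y / of_nat N ^ d * (\<Sum>m\<in>ZN N d. chi N (dotp d x m - dotp d y m)))"
    unfolding fhat_def sum_distrib_left sum_divide_distrib
    by (subst sum.swap) (simp add: chi_add[symmetric] algebra_simps)
  also have "\<dots> = (\<Sum>y\<in>ZN N d. if y = x then h x else 0)"
    using assms by (intro sum.cong refl) (auto simp: sum_ZN_chi_dotp_diff)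
  also have "\<dots> = h x"
    using assms by (simp add: finite_ZN)
  finally show ?thesis .
qed

lemma powr_mult_le:
  fixes s z r :: real
  assumes "0 \<le> s" "s \<le> 1" "0 \<le> z" "r \<ge> 1"
  shows "(s * z) powr r \<le> s * z powr r"
proof -
  have "s powr r \<le> s"
    using assms by (cases "s = 0") (auto intro: powr_le_one_le)
  then show ?thesis
    using assms by (simp add: powr_mult mult_right_mono)
qed

text \<open>The library's \<open>powr_convex\<close> only covers \<open>{0<..}\<close>.\<close>

lemma convex_on_powr_nonneg:
  fixes r :: real
  assumes "r \<ge> 1"
  shows "convex_on {0..} (\<lambda>x. x powr r)"
proof (rule convex_onI)
  fix t x y :: real
  assume t: "0 < t" "t < 1" and xy: "x \<in> {0..}" "y \<in> {0..}"
  show "((1 - t) *\<^sub>R x + t *\<^sub>R y) powr r \<le> (1 - t) * x powr r + t * y powr r"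
  proof (cases "x = 0 \<or> y = 0")
    case True
    then show ?thesis
      using powr_mult_le[of t y r] powr_mult_le[of "1 - t" x r] t xy assms by auto
  next
    case False
    then have "x \<in> {0<..}" "y \<in> {0<..}"
      using xy by auto
    with convex_onD[OF powr_convex[OF assms]] t show ?thesis
      by auto
  qed
qed simp

lemma sum_le_card_mult_power_mean:
  fixes c :: "'a \<Rightarrow> real"
  assumes "finite S" "S \<noteq> {}" "r \<ge> 1" "\<And>i. i \<in> S \<Longrightarrow> c i \<ge> 0"
  shows "sum c S \<le> card S * ((1 / card S) * (\<Sum>i\<in>S. c i powr r)) powr (1 / r)"
proof -
  define n where "n = real (card S)"
  have "n > 0"
    using assms by (simp add: n_def card_gt_0_iff)
  have "(\<Sum>i\<in>S. (1 / n) *\<^sub>R c i) powr r \<le> (\<Sum>i\<in>S. (1 / n) * c i powr r)"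
    using \<open>n > 0\<close> assms
    by (intro convex_on_sum[OF assms(1,2) convex_on_powr_nonneg[OF assms(3)]])
      (auto simp: n_def sum_distrib_left[symmetric])
  then have "((sum c S / n) powr r) powr (1 / r) \<le> ((1 / n) * (\<Sum>i\<in>S. c i powr r)) powr (1 / r)"
    using assms by (intro powr_mono2) (auto simp: sum_distrib_left sum_divide_distrib intro!: sum_nonneg)
  also have "((sum c S / n) powr r) powr (1 / r) = sum c S / n"
    using assms \<open>n > 0\<close> by (simp add: powr_powr sum_nonneg)
  finally show ?thesis
    using \<open>n > 0\<close> by (simp add: n_def field_simps)
qed

lemma sum_norm_le_card_mult_avgnorm:
  assumes "finite S" "S \<noteq> {}" "1 \<le> q"
  shows "(\<Sum>m\<in>S. cmod (g m)) \<le> card S * avgnorm q S g"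
proof (cases "q = \<infinity>")
  case True
  then show ?thesis
    using assms by (simp add: avgnorm_def sum_bounded_above)
next
  case False
  with assms have "real_of_ereal q \<ge> 1"
    by (cases q) auto
  with False show ?thesis
    unfolding avgnorm_def using sum_le_card_mult_power_mean[OF assms(1,2)] by simp
qed

lemma lpnorm_indicator_le:
  assumes "finite A" "A \<noteq> {}" "E \<subseteq> A" "1 \<le> p"
  shows "lpnorm p A (indicator E :: _ \<Rightarrow> complex)
           \<le> (if p = \<infinity> then 1 else real (card E) powr (1 / real_of_ereal p))"
proof (cases "p = \<infinity>")
  case True
  then show ?thesis
    using assms by (simp add: lpnorm_def Max_le_iff indicator_def)
next
  case False
  with assms have "real_of_ereal p \<ge> 1"
    by (cases p) auto
  then have "(\<Sum>x\<in>A. cmod (indicator E x :: complex) powr real_of_ereal p) = (\<Sum>x\<in>A. indicator E x)"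
    by (intro sum.cong) (auto simp: indicator_def)
  also have "\<dots> = real (\<Sum>x\<in>A. indicator E x :: nat)"
    by (simp add: indicator_def)
  also have "\<dots> = real (card E)"
    by (simp add: sum_indicator_eq_card assms(1) Int_absorb1[OF assms(3)])
  finally show ?thesis
    using False by (simp add: lpnorm_def)
qed

lemma restriction_estimate_sum_norm_fhat_le:
  assumes "restriction_estimate N d S p q C" "finite S" "S \<noteq> {}" "1 \<le> q"
  shows "(\<Sum>m\<in>S. cmod (fhat N d h m)) \<le> card S * (C / real N ^ d * lpnorm p (ZN N d) h)"
proof -
  have "avgnorm q S (fhat N d h) \<le> C / real N ^ d * lpnorm p (ZN N d) h"
    using assms(1) by (simp add: restriction_estimate_def)
  with sum_norm_le_card_mult_avgnorm[OF assms(2-4)] show ?thesis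
    by (meson mult_left_mono of_nat_0_le_iff order_trans)
qed

lemma norm_partial_inversion_indicator_ge_half_iff:
  assumes "x \<in> ZN N d" "N > 0" "S \<subseteq> ZN N d"
    and small: "(\<Sum>m\<in>S. cmod (fhat N d (indicator E) m)) < 1/2"
  shows "cmod (\<Sum>m\<in>ZN N d - S. chi N (dotp d x m) * fhat N d (indicator E) m) \<ge> 1/2
           \<longleftrightarrow> x \<in> E"
proof -
  define e where "e = (\<Sum>m\<in>S. chi N (dotp d x m) * fhat N d (indicator E) m)"
  have "cmod e \<le> (\<Sum>m\<in>S. cmod (fhat N d (indicator E) m))"
    unfolding e_def by (rule sum_norm_le) (simp add: norm_mult)
  with small have e: "cmod e < 1/2"
    by linarith
  have "(\<Sum>m\<in>ZN N d - S. chi N (dotp d x m) * fhat N d (indicator E) m) = indicator E x - e"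
    unfolding e_def by (simp add: sum_diff[OF finite_ZN assms(3)] fourier_inversion assms(1,2))
  moreover have "cmod (1 - e) \<ge> 1/2"
    using norm_triangle_ineq2[of 1 e] e by simp
  ultimately show ?thesis
    using e by (simp add: indicator_def)
qed

theorem theorem4:
  fixes N d :: nat and p q :: ereal and C :: real
    and S E :: "(nat \<Rightarrow> nat) set"
  assumes "N \<ge> 2" and "d \<ge> 1"
    and "1 \<le> p" and "p \<le> q"
    and "S \<subseteq> ZN N d" and "S \<noteq> {}"
    and "C > 0" and "restriction_estimate N d S p q C"
    and "E \<subseteq> ZN N d"
    and "(if p = \<infinity> then 1 else real (card E) powr (1 / real_of_ereal p)) * real (card S)
           < real N ^ d / (2 * C)"
  shows "\<forall>x\<in>ZN N d.
     (let r = (\<Sum>m\<in>ZN N d - S. chi N (dotp d x m) * fhat N d (indicator E) m)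
      in (if cmod r \<ge> 1/2 then 1 else 0) = (indicator E x :: real))"
proof -
  define B where "B = (if p = \<infinity> then 1 else real (card E) powr (1 / real_of_ereal p))"
  have "N > 0"
    using assms(1) by simp
  have "(\<Sum>m\<in>S. cmod (fhat N d (indicator E) m))
          \<le> card S * (C / real N ^ d * lpnorm p (ZN N d) (indicator E))"
    using finite_subset[OF assms(5) finite_ZN] order_trans[OF assms(3,4)]
    by (intro restriction_estimate_sum_norm_fhat_le[OF assms(8) _ assms(6)])
  also have "\<dots> \<le> card S * (C / real N ^ d * B)"
    using lpnorm_indicator_le[OF finite_ZN ZN_nonempty[OF \<open>N > 0\<close>] assms(9,3)] assms(7)
    by (intro mult_left_mono) (auto simp: B_def)
  also have "\<dots> < 1/2"
  proof -
    have "B * card S * (2 * C) < real N ^ d"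
      using assms(7,10) by (simp add: B_def pos_less_divide_eq)
    then show ?thesis
      using \<open>N > 0\<close> by (simp add: field_simps)
  qed
  finally show ?thesis
    using norm_partial_inversion_indicator_ge_half_iff[OF _ \<open>N > 0\<close> assms(5)]
    by (simp add: Let_def indicator_def)
qed

end
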